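(* Let $\mathbb{F}\in\{\mathbb{R},\mathbb{C}\}$, let $N\ge2$, $M\ge 2$ and $Q$ be integers with $1\le Q\le M-1$, write $\mathcal{M}=\{1,\dots,M\}$, let $0\le\epsilon\le1$, and let $\mathbf{H}_1,\dots,\mathbf{H}_M$ be $N\times N$ positive semidefinite matrices (real symmetric if $\mathbb{F}=\mathbb{R}$, Hermitian if $\mathbb{F}=\mathbb{C}$). Let $(\bar{\boldsymbol\beta},\bar{\mathbf{X}}^{(2)})$ be an optimal solution of the problem (SDP2): minimize $\mathrm{Tr}[\mathbf{X}^{(2)}]$ over $\boldsymbol\beta\in\mathbb{R}^M$ and $N\times N$ matrices $\mathbf{X}^{(2)}\succeq0$ (real symmetric if $\mathbb{F}=\mathbb{R}$, Hermitian if $\mathbb{F}=\mathbb{C}$) subject to $\mathrm{Tr}[\mathbf{H}_i\mathbf{X}^{(2)}]\ge\beta_i+(1-\beta_i)\epsilon$ for $i\in\mathcal{M}$, $\sum_{i\in\mathcal{M}}\beta_i=Q$, $0\le\beta_i\le1$ for $i\in\mathcal{M}$. Let $\bar{\boldsymbol\beta}_{[Q]}$ be the $Q$-th largest entry of $\bar{\boldsymbol\beta}$ and $\mathcal{I}=\{i\in\mathcal{M}:\bar{\boldsymbol\beta}[i]\ge\bar{\boldsymbol\beta}_{[Q]}\}$. Then $\bar{\boldsymbol\beta}[i]\ge\frac{1}{M-Q+1}$ for all $i\in\mathcal{I}$.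
   Context: $\bar{\boldsymbol\beta}[i]$ denotes the $i$-th entry of $\bar{\boldsymbol\beta}$. *)

theory Defs
  imports "HOL-Analysis.Analysis"
begin

text \<open>Real case: real symmetric positive semidefinite N x N matrices
  (the dimension N is the cardinality of the finite index type 'n).\<close>
definition psd_real :: "real^'n^'n \<Rightarrow> bool" where
  "psd_real A \<longleftrightarrow> transpose A = A \<and> (\<forall>x::real^'n. 0 \<le> x \<bullet> (A *v x))"

definition hermitian :: "complex^'n^'n \<Rightarrow> bool" where
  "hermitian A \<longleftrightarrow> (\<forall>i j. A $ i $ j = cnj (A $ j $ i))"

definition psd_complex :: "complex^'n^'n \<Rightarrow> bool" where
  "psd_complex A \<longleftrightarrow> hermitian A \<and>
     (\<forall>x::complex^'n. 0 \<le> Re (\<Sum>i\<in>UNIV. cnj (x $ i) * (A *v x) $ i))"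

text \<open>Feasibility for (SDP2); indices i range over {1..M}; beta :: nat => real
  represents a vector in R^M (values outside {1..M} are irrelevant).\<close>
definition sdp2_feasible_real ::
  "real \<Rightarrow> nat \<Rightarrow> nat \<Rightarrow> (nat \<Rightarrow> real^'n^'n) \<Rightarrow> (nat \<Rightarrow> real) \<Rightarrow> real^'n^'n \<Rightarrow> bool" where
  "sdp2_feasible_real \<epsilon> M Q H \<beta> X \<longleftrightarrow>
     psd_real X \<and>
     (\<forall>i\<in>{1..M}. trace (H i ** X) \<ge> \<beta> i + (1 - \<beta> i) * \<epsilon>) \<and>
     (\<Sum>i\<in>{1..M}. \<beta> i) = real Q \<and>
     (\<forall>i\<in>{1..M}. 0 \<le> \<beta> i \<and> \<beta> i \<le> 1)"

definition sdp2_optimal_real ::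
  "real \<Rightarrow> nat \<Rightarrow> nat \<Rightarrow> (nat \<Rightarrow> real^'n^'n) \<Rightarrow> (nat \<Rightarrow> real) \<Rightarrow> real^'n^'n \<Rightarrow> bool" where
  "sdp2_optimal_real \<epsilon> M Q H \<beta> X \<longleftrightarrow>
     sdp2_feasible_real \<epsilon> M Q H \<beta> X \<and>
     (\<forall>\<beta>' X'. sdp2_feasible_real \<epsilon> M Q H \<beta>' X' \<longrightarrow> trace X \<le> trace X')"

text \<open>Complex case. For Hermitian H, X the traces Tr[H X] and Tr[X] are real;
  we compare their real parts.\<close>
definition sdp2_feasible_complex ::
  "real \<Rightarrow> nat \<Rightarrow> nat \<Rightarrow> (nat \<Rightarrow> complex^'n^'n) \<Rightarrow> (nat \<Rightarrow> real) \<Rightarrow> complex^'n^'n \<Rightarrow> bool" where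
  "sdp2_feasible_complex \<epsilon> M Q H \<beta> X \<longleftrightarrow>
     psd_complex X \<and>
     (\<forall>i\<in>{1..M}. Re (trace (H i ** X)) \<ge> \<beta> i + (1 - \<beta> i) * \<epsilon>) \<and>
     (\<Sum>i\<in>{1..M}. \<beta> i) = real Q \<and>
     (\<forall>i\<in>{1..M}. 0 \<le> \<beta> i \<and> \<beta> i \<le> 1)"

definition sdp2_optimal_complex ::
  "real \<Rightarrow> nat \<Rightarrow> nat \<Rightarrow> (nat \<Rightarrow> complex^'n^'n) \<Rightarrow> (nat \<Rightarrow> real) \<Rightarrow> complex^'n^'n \<Rightarrow> bool" where
  "sdp2_optimal_complex \<epsilon> M Q H \<beta> X \<longleftrightarrow>
     sdp2_feasible_complex \<epsilon> M Q H \<beta> X \<and>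
     (\<forall>\<beta>' X'. sdp2_feasible_complex \<epsilon> M Q H \<beta>' X' \<longrightarrow> Re (trace X) \<le> Re (trace X'))"

text \<open>The Q-th largest entry (counted with multiplicity, 1-based) of
  (beta 1, ..., beta M).\<close>
definition qth_largest :: "nat \<Rightarrow> nat \<Rightarrow> (nat \<Rightarrow> real) \<Rightarrow> real" where
  "qth_largest M Q \<beta> = rev (sort (map \<beta> [1..<M+1])) ! (Q - 1)"

end

theory Submission
  imports Defs
begin

text \<open>Only the constraints \<open>0 \<le> \<beta> i \<le> 1\<close> and \<open>\<Sum>i. \<beta> i = Q\<close> matter. Sort the entries
  decreasingly: the \<open>Q - 1\<close> largest contribute at most \<open>Q - 1\<close> to the sum, so the remaining
  \<open>M - Q + 1\<close> entries, each at most the \<open>Q\<close>-th largest \<open>b\<close>, contribute at least \<open>1\<close>; hence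
  \<open>(M - Q + 1) b \<ge> 1\<close>, and every entry \<open>\<ge> b\<close> is \<open>\<ge> 1 / (M - Q + 1)\<close>.\<close>

lemma sum_list_le_length_mult:
  fixes xs :: "real list"
  assumes "\<forall>x\<in>set xs. x \<le> c"
  shows "sum_list xs \<le> real (length xs) * c"
  using assms by (induction xs) (auto simp: algebra_simps)

lemma in_set_drop_rev_sort_le_nth:
  fixes xs :: "'a::linorder list"
  assumes "x \<in> set (drop j (rev (sort xs)))"
  shows "x \<le> rev (sort xs) ! j"
proof -
  from assms obtain d where d: "j + d < length xs" "x = rev (sort xs) ! (j + d)"
    by (auto simp: in_set_conv_nth) (metis less_diff_conv add.commute)
  have "sort xs ! (length xs - Suc (j + d)) \<le> sort xs ! (length xs - Suc j)"
    using d(1) by (intro sorted_nth_mono) auto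
  with d show ?thesis by (simp add: rev_nth)
qed

lemma sum_list_le_nth_largest:
  fixes xs :: "real list"
  assumes le1: "\<forall>x\<in>set xs. x \<le> 1" and k: "1 \<le> k" "k \<le> length xs"
  shows "sum_list xs - real (k - 1) \<le> real (length xs - k + 1) * rev (sort xs) ! (k - 1)"
proof -
  define ys where "ys = rev (sort xs)"
  have len: "length ys = length xs" by (simp add: ys_def)
  have "sum_list xs = sum_list ys"
    unfolding ys_def by (metis mset_rev mset_sort sum_mset_sum_list)
  also have "\<dots> = sum_list (take (k - 1) ys) + sum_list (drop (k - 1) ys)"
    by (metis append_take_drop_id sum_list_append)
  also have "sum_list (take (k - 1) ys) \<le> real (k - 1)"
  proof -
    have "\<forall>x\<in>set (take (k - 1) ys). x \<le> 1"
      using le1 by (auto simp: ys_def dest: in_set_takeD)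
    then show ?thesis
      using sum_list_le_length_mult[of "take (k - 1) ys" 1] len k by simp
  qed
  also have "sum_list (drop (k - 1) ys) \<le> real (length xs - k + 1) * ys ! (k - 1)"
    using sum_list_le_length_mult[of "drop (k - 1) ys"] in_set_drop_rev_sort_le_nth[of _ "k - 1" xs]
      len k by (simp add: ys_def Suc_diff_le)
  finally show ?thesis by (simp add: ys_def)
qed

lemma qth_largest_ge:
  fixes \<beta> :: "nat \<Rightarrow> real" and M Q :: nat
  assumes bounds: "\<forall>i\<in>{1..M}. 0 \<le> \<beta> i \<and> \<beta> i \<le> 1"
    and sum: "(\<Sum>i\<in>{1..M}. \<beta> i) = real Q" and Q: "1 \<le> Q" "Q \<le> M"
  shows "1 / real (M - Q + 1) \<le> qth_largest M Q \<beta>"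
proof -
  define xs where "xs = map \<beta> [1..<M+1]"
  have "sum_list xs = real Q"
    using sum by (simp add: xs_def sum_list_distinct_conv_sum_set atLeastLessThanSuc_atLeastAtMost
        del: upt_Suc)
  moreover have "\<forall>x\<in>set xs. x \<le> 1"
    using bounds by (auto simp: xs_def)
  ultimately have "1 \<le> real (M - Q + 1) * qth_largest M Q \<beta>"
    using sum_list_le_nth_largest[of xs Q] Q
    by (simp add: qth_largest_def xs_def of_nat_diff)
  then show ?thesis
    by (simp add: divide_simps mult.commute)
qed

theorem lemma2p3:
  fixes M Q :: nat and \<epsilon> :: real
    and HR :: "nat \<Rightarrow> real^'n^'n" and \<beta>R :: "nat \<Rightarrow> real" and XR :: "real^'n^'n"
    and HC :: "nat \<Rightarrow> complex^'n^'n" and \<beta>C :: "nat \<Rightarrow> real" and XC :: "complex^'n^'n"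
  assumes N: "CARD('n) \<ge> 2"
    and M: "M \<ge> 2" and Q: "1 \<le> Q" "Q \<le> M - 1"
    and eps: "0 \<le> \<epsilon>" "\<epsilon> \<le> 1"
  shows
    "((\<forall>i\<in>{1..M}. psd_real (HR i)) \<and> sdp2_optimal_real \<epsilon> M Q HR \<beta>R XR \<longrightarrow>
        (\<forall>i\<in>{i\<in>{1..M}. \<beta>R i \<ge> qth_largest M Q \<beta>R}. \<beta>R i \<ge> 1 / real (M - Q + 1)))
     \<and>
     ((\<forall>i\<in>{1..M}. psd_complex (HC i)) \<and> sdp2_optimal_complex \<epsilon> M Q HC \<beta>C XC \<longrightarrow>
        (\<forall>i\<in>{i\<in>{1..M}. \<beta>C i \<ge> qth_largest M Q \<beta>C}. \<beta>C i \<ge> 1 / real (M - Q + 1)))"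
proof (intro conjI impI ballI)
  have "Q \<le> M" using Q by linarith
  fix i
  {
    assume "(\<forall>i\<in>{1..M}. psd_real (HR i)) \<and> sdp2_optimal_real \<epsilon> M Q HR \<beta>R XR"
      and "i \<in> {i\<in>{1..M}. \<beta>R i \<ge> qth_largest M Q \<beta>R}"
    with qth_largest_ge[of M \<beta>R Q] Q(1) \<open>Q \<le> M\<close> show "\<beta>R i \<ge> 1 / real (M - Q + 1)"
      by (auto simp: sdp2_optimal_real_def sdp2_feasible_real_def)
  next
    assume "(\<forall>i\<in>{1..M}. psd_complex (HC i)) \<and> sdp2_optimal_complex \<epsilon> M Q HC \<beta>C XC"
      and "i \<in> {i\<in>{1..M}. \<beta>C i \<ge> qth_largest M Q \<beta>C}"
    with qth_largest_ge[of M \<beta>C Q] Q(1) \<open>Q \<le> M\<close> show "\<beta>C i \<ge> 1 / real (M - Q + 1)"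
      by (auto simp: sdp2_optimal_complex_def sdp2_feasible_complex_def)
  }
qed

end
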